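(* An uncountable separable metrizable space $X$ is a Lusin set if and only if $t(K)=\omega$ for every compact subset $K$ of $Q_p(X,\mathbb{R})$.
   Context: A function $f:X\to\mathbb{R}$ is quasicontinuous if for every $x\in X$, every open $V\ni f(x)$ and every open $U\ni x$ there is a nonempty open $W\subseteq U$ with $f(W)\subseteq V$. $Q_p(X,\mathbb{R})$ is the set of all quasicontinuous real-valued functions on $X$ with the topology of pointwise convergence. A separable metrizable space $X$ is a Lusin set ($\aleph_1$-Lusin set) if $X$ is uncountable and $X\cap M$ is countable for every meager subset $M$ of $X$. $t(K)=\omega$ means: for every $z\in K$ and $A\subseteq K$ with $z\in\overline{A}$ there is a countable $B\subseteq A$ with $z\in\overline{B}$. *)

theory Defs
  imports "HOL-Analysis.Analysis"
begin

definition nowhere_dense_in :: "'a topology \<Rightarrow> 'a set \<Rightarrow> bool" where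
  "nowhere_dense_in X S \<longleftrightarrow> S \<subseteq> topspace X \<and> X interior_of (X closure_of S) = {}"

definition meager_in :: "'a topology \<Rightarrow> 'a set \<Rightarrow> bool" where
  "meager_in X M \<longleftrightarrow> (\<exists>F. countable F \<and> (\<forall>S\<in>F. nowhere_dense_in X S) \<and> M = \<Union>F)"

definition lusin_set :: "'a topology \<Rightarrow> bool" where
  "lusin_set X \<longleftrightarrow> separable_space X \<and> metrizable_space X \<and> uncountable (topspace X) \<and>
     (\<forall>M. meager_in X M \<longrightarrow> countable M)"

definition quasicontinuous :: "'a topology \<Rightarrow> ('a \<Rightarrow> real) \<Rightarrow> bool" where
  "quasicontinuous X f \<longleftrightarrow>
     (\<forall>x\<in>topspace X. \<forall>V U. open V \<and> f x \<in> V \<and> openin X U \<and> x \<in> U \<longrightarrow>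
        (\<exists>W. openin X W \<and> W \<noteq> {} \<and> W \<subseteq> U \<and> f ` W \<subseteq> V))"

text \<open>Q_p(X,R): quasicontinuous real functions on X (represented extensionally,
  i.e. undefined outside topspace X) with the topology of pointwise convergence.\<close>
definition Qp :: "'a topology \<Rightarrow> ('a \<Rightarrow> real) topology" where
  "Qp X = subtopology (product_topology (\<lambda>_. euclideanreal) (topspace X))
            {f \<in> extensional (topspace X). quasicontinuous X f}"

definition countable_tightness :: "'a topology \<Rightarrow> bool" where
  "countable_tightness T \<longleftrightarrow>
     (\<forall>z\<in>topspace T. \<forall>A. A \<subseteq> topspace T \<and> z \<in> T closure_of A \<longrightarrow>
        (\<exists>B. B \<subseteq> A \<and> countable B \<and> z \<in> T closure_of B))"

end

theory Submission
  imports Defs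
begin

(* If X is a Lusin set, the discontinuity points of a quasicontinuous z form a meager, hence
   countable, set. Given z in the closure of A inside a compact K, pick a sequence in A
   converging to z on a countable dense set together with these discontinuity points, and a
   cluster point g of it in K. Then g is quasicontinuous and agrees with z on that countable
   set, which forces g = z: so z already lies in the closure of a countable part of A.

   Conversely, an uncountable meager set gives an uncountable closed nowhere dense F, and in a
   separable metric space such an F lies in the common boundary of two disjoint open sets G
   and H. Every function equal to the indicator of the closure of G off F and taking arbitrary
   values 0, 1 on F is quasicontinuous, so Qp X contains the Cantor cube {0,1}^F. This cube is
   compact, but since F is uncountable it is not countably tight at the constant function 1,
   which lies in the closure of the finitely supported functions. *)

lemma topspace_Qp: "topspace (Qp X) = {f \<in> extensional (topspace X). quasicontinuous X f}"
  by (auto simp: Qp_def PiE_def)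

lemma subtopology_Qp:
  assumes "K \<subseteq> topspace (Qp X)"
  shows "subtopology (Qp X) K = subtopology (powertop_real (topspace X)) K"
  using assms by (simp add: Qp_def subtopology_subtopology Int_absorb1)

lemma compactin_Qp:
  "compactin (Qp X) K \<longleftrightarrow> compactin (powertop_real (topspace X)) K \<and> K \<subseteq> topspace (Qp X)"
proof -
  have "compactin (powertop_real (topspace X)) K \<Longrightarrow> K \<subseteq> topspace (powertop_real (topspace X))"
    by (rule compactin_subset_topspace)
  then show ?thesis
    unfolding Qp_def compactin_subtopology topspace_subtopology by auto
qed

lemma nowhere_dense_inI:
  assumes "S \<subseteq> topspace X"
    and "\<And>U. \<lbrakk>openin X U; U \<noteq> {}\<rbrakk> \<Longrightarrow> \<exists>W. openin X W \<and> W \<noteq> {} \<and> W \<subseteq> U \<and> W \<inter> S = {}"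
  shows "nowhere_dense_in X S"
  unfolding nowhere_dense_in_def
proof (intro conjI assms(1))
  let ?U = "X interior_of (X closure_of S)"
  show "?U = {}"
  proof (rule ccontr)
    assume "?U \<noteq> {}"
    then obtain W where W: "openin X W" "W \<noteq> {}" "W \<subseteq> ?U" "W \<inter> S = {}"
      using assms(2)[of ?U] openin_interior_of by blast
    then have "W \<inter> X closure_of S = {}"
      by (simp add: openin_Int_closure_of_eq_empty)
    moreover have "W \<subseteq> X closure_of S"
      using W(3) interior_of_subset by (rule order_trans)
    ultimately show False using W(2) by blast
  qed
qed

lemma quasicontinuousD:
  assumes "quasicontinuous X f" "x \<in> topspace X" "open V" "f x \<in> V" "openin X U" "x \<in> U"
  obtains W where "openin X W" "W \<noteq> {}" "W \<subseteq> U" "f ` W \<subseteq> V"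
  using assms unfolding quasicontinuous_def by meson

lemma quasicontinuousI_locally_constant:
  assumes "\<And>x U. \<lbrakk>x \<in> topspace X; openin X U; x \<in> U\<rbrakk> \<Longrightarrow>
             \<exists>W. openin X W \<and> W \<noteq> {} \<and> W \<subseteq> U \<and> (\<forall>w\<in>W. f w = f x)"
  shows "quasicontinuous X f"
  unfolding quasicontinuous_def
proof (intro ballI allI impI, elim conjE)
  fix x V U assume x: "x \<in> topspace X" and V: "f x \<in> V" and U: "openin X U" "x \<in> U"
  obtain W where W: "openin X W" "W \<noteq> {}" "W \<subseteq> U" "\<forall>w\<in>W. f w = f x"
    using assms[OF x U] by blast
  have "f ` W \<subseteq> V"
    using W(4) V by auto
  then show "\<exists>W. openin X W \<and> W \<noteq> {} \<and> W \<subseteq> U \<and> f ` W \<subseteq> V"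
    using W(1-3) by blast
qed

lemma nowhere_dense_in_oscillation_ge:
  assumes "quasicontinuous X f" "e > 0"
  shows "nowhere_dense_in X {x \<in> topspace X. \<forall>U. openin X U \<and> x \<in> U \<longrightarrow> (\<exists>y\<in>U. e \<le> \<bar>f y - f x\<bar>)}"
    (is "nowhere_dense_in X ?E")
proof (rule nowhere_dense_inI)
  fix U assume U: "openin X U" "U \<noteq> {}"
  then obtain x where x: "x \<in> U" "x \<in> topspace X"
    using openin_subset by blast
  have "f x \<in> ball (f x) (e/4)"
    using assms(2) by simp
  then obtain W where W: "openin X W" "W \<noteq> {}" "W \<subseteq> U" "f ` W \<subseteq> ball (f x) (e/4)"
    by (rule quasicontinuousD[OF assms(1) x(2) open_ball _ U(1) x(1)])
  have "w \<notin> ?E" if "w \<in> W" for w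
  proof
    assume "w \<in> ?E"
    then obtain y where "y \<in> W" "e \<le> \<bar>f y - f w\<bar>"
      using W(1) \<open>w \<in> W\<close> by blast
    moreover have "dist (f x) (f y) < e/4" "dist (f x) (f w) < e/4"
      using W(4) \<open>y \<in> W\<close> \<open>w \<in> W\<close> by auto
    ultimately show False
      unfolding dist_real_def by linarith
  qed
  then show "\<exists>W. openin X W \<and> W \<noteq> {} \<and> W \<subseteq> U \<and> W \<inter> ?E = {}"
    using W by blast
qed auto

definition discontinuities :: "'a topology \<Rightarrow> ('a \<Rightarrow> real) \<Rightarrow> 'a set" where
  "discontinuities X f =
     {x \<in> topspace X. \<exists>e>0. \<forall>U. openin X U \<and> x \<in> U \<longrightarrow> (\<exists>y\<in>U. e \<le> \<bar>f y - f x\<bar>)}"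

lemma meager_in_discontinuities:
  assumes "quasicontinuous X f"
  shows "meager_in X (discontinuities X f)"
proof -
  define E where "E n = {x \<in> topspace X. \<forall>U. openin X U \<and> x \<in> U \<longrightarrow>
                            (\<exists>y\<in>U. 1 / real (Suc n) \<le> \<bar>f y - f x\<bar>)}" for n
  have "discontinuities X f = \<Union>(range E)"
  proof (intro equalityI subsetI)
    fix x assume "x \<in> discontinuities X f"
    then obtain e where x: "x \<in> topspace X" "e > 0"
      and e: "\<And>U. openin X U \<Longrightarrow> x \<in> U \<Longrightarrow> \<exists>y\<in>U. e \<le> \<bar>f y - f x\<bar>"
      unfolding discontinuities_def by blast
    obtain n where n: "1 / real (Suc n) < e"
      using \<open>e > 0\<close> nat_approx_posE by blast
    have "x \<in> E n"
      unfolding E_def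
    proof (intro CollectI conjI allI impI)
      fix U assume "openin X U \<and> x \<in> U"
      then obtain y where "y \<in> U" "e \<le> \<bar>f y - f x\<bar>"
        using e by blast
      then show "\<exists>y\<in>U. 1 / real (Suc n) \<le> \<bar>f y - f x\<bar>"
        using n by (intro bexI[of _ y]) auto
    qed (rule x(1))
    then show "x \<in> \<Union>(range E)" by blast
  next
    fix x assume "x \<in> \<Union>(range E)"
    then obtain n where "x \<in> E n" by blast
    then show "x \<in> discontinuities X f"
      unfolding discontinuities_def E_def
      by (intro CollectI conjI exI[of _ "1 / real (Suc n)"]) auto
  qed
  moreover have "nowhere_dense_in X (E n)" for n
    unfolding E_def by (rule nowhere_dense_in_oscillation_ge[OF assms]) simp
  ultimately show ?thesis
    unfolding meager_in_def by (intro exI[of _ "range E"]) auto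
qed

lemma quasicontinuous_eq_at_continuity_point:
  assumes g: "quasicontinuous X g" and x: "x \<in> topspace X" "x \<notin> discontinuities X f"
    and S: "X closure_of S = topspace X" and eq: "\<And>y. y \<in> S \<Longrightarrow> g y = f y"
  shows "g x = f x"
proof (rule ccontr)
  define e where "e = \<bar>g x - f x\<bar> / 2"
  assume "g x \<noteq> f x"
  then have "e > 0" by (simp add: e_def)
  then have "\<not> (\<forall>U. openin X U \<and> x \<in> U \<longrightarrow> (\<exists>y\<in>U. e \<le> \<bar>f y - f x\<bar>))"
    using x unfolding discontinuities_def by blast
  then obtain U where U: "openin X U" "x \<in> U" "\<And>y. y \<in> U \<Longrightarrow> \<bar>f y - f x\<bar> < e"
    by (meson not_le)
  have "g x \<in> ball (g x) e"
    using \<open>e > 0\<close> by simp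
  then obtain W where W: "openin X W" "W \<noteq> {}" "W \<subseteq> U" "g ` W \<subseteq> ball (g x) e"
    by (rule quasicontinuousD[OF g x(1) open_ball _ U(1,2)])
  obtain w where "w \<in> W"
    using W(2) by blast
  then have "w \<in> X closure_of S"
    using S openin_subset[OF W(1)] by blast
  then obtain y where "y \<in> S" "y \<in> W"
    using W(1) \<open>w \<in> W\<close> unfolding in_closure_of by blast
  then have "g y \<in> ball (g x) e" "\<bar>f y - f x\<bar> < e" "g y = f y"
    using W(3,4) U(3) eq by blast+
  then have "\<bar>g y - g x\<bar> < e" "\<bar>f y - f x\<bar> < e" "g y = f y"
    by (simp_all add: dist_real_def abs_minus_commute)
  then show False
    unfolding e_def by argo
qed

lemma quasicontinuous_extensional_eqI:
  assumes g: "quasicontinuous X g" "g \<in> extensional (topspace X)"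
    and f: "f \<in> extensional (topspace X)"
    and S: "X closure_of S = topspace X"
    and eq: "\<And>x. x \<in> S \<union> discontinuities X f \<Longrightarrow> g x = f x"
  shows "g = f"
proof (rule extensionalityI[OF g(2) f])
  fix x assume x: "x \<in> topspace X"
  show "g x = f x"
  proof (cases "x \<in> discontinuities X f")
    case False
    then show ?thesis
      using quasicontinuous_eq_at_continuity_point[OF g(1) x False S] eq by blast
  qed (use eq in blast)
qed

lemma openin_powertop_real_coordinate:
  assumes "i \<in> I" "open V"
  shows "openin (powertop_real I) {f \<in> topspace (powertop_real I). f i \<in> V}"
proof -
  have "continuous_map (powertop_real I) euclideanreal (\<lambda>f. f i)"
    using continuous_map_product_projection[OF assms(1), of "\<lambda>_. euclideanreal"] by simp
  then show ?thesis
    using openin_continuous_map_preimage assms(2) by fastforce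
qed

lemma compactin_cluster_point:
  fixes b :: "nat \<Rightarrow> 'a"
  assumes "compactin T K" "range b \<subseteq> K"
  obtains g where "g \<in> K" "\<And>m. g \<in> T closure_of (b ` {m..})"
proof -
  define D where "D m = K \<inter> T closure_of (b ` {m..})" for m
  have "compact_space (subtopology T K)"
    using assms(1) compactin_subspace by blast
  then have "(\<Inter>m. D m) \<noteq> {}"
  proof (rule compact_space_imp_nest)
    show "closedin (subtopology T K) (D m)" for m
      unfolding D_def closedin_subtopology by (metis closedin_closure_of inf_commute)
    have "b m \<in> D m" for m
      using assms closure_of_subset[of "b ` {m..}" T] compactin_subset_topspace
      unfolding D_def by fastforce
    then show "D m \<noteq> {}" for m
      by blast
    show "decseq D"
      unfolding decseq_def D_def
      by (metis Int_mono atLeast_subset_iff closure_of_mono image_mono order_refl)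
  qed
  then show ?thesis
    using that unfolding D_def by blast
qed

lemma cluster_point_coordinate_eq_limit:
  assumes g: "\<And>m. g \<in> powertop_real I closure_of (b ` {m..})" and "i \<in> I"
    and lim: "(\<lambda>n. b n i) \<longlonglongrightarrow> c"
  shows "g i = c"
proof (rule ccontr)
  define e where "e = \<bar>g i - c\<bar> / 2"
  assume "g i \<noteq> c"
  then have "e > 0" by (simp add: e_def)
  then obtain m where m: "\<And>n. n \<ge> m \<Longrightarrow> dist (b n i) c < e"
    using lim unfolding lim_sequentially by blast
  let ?O = "{f \<in> topspace (powertop_real I). f i \<in> ball (g i) e}"
  have "openin (powertop_real I) ?O"
    using openin_powertop_real_coordinate[OF \<open>i \<in> I\<close> open_ball] .
  moreover have "g \<in> ?O"
    using g[of 0] \<open>e > 0\<close> by (simp add: in_closure_of)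
  ultimately have "b ` {m..} \<inter> ?O \<noteq> {}"
    using g[of m] unfolding in_closure_of by (meson disjoint_iff)
  then obtain n where "n \<ge> m" "b n i \<in> ball (g i) e"
    by auto
  then have "\<bar>b n i - c\<bar> < e" "\<bar>b n i - g i\<bar> < e"
    using m[of n] by (simp_all add: dist_real_def abs_minus_commute)
  then show False
    unfolding e_def by argo
qed

lemma LIMSEQ_dist_less_inverse_Suc:
  assumes "\<And>n. n > k \<Longrightarrow> dist (u n) c < 1 / real (Suc n)"
  shows "u \<longlonglongrightarrow> c"
  unfolding lim_sequentially
proof (intro allI impI)
  fix r :: real assume "r > 0"
  then obtain m where m: "1 / real (Suc m) < r"
    using nat_approx_posE by blast
  have "dist (u n) c < r" if "n \<ge> max m (Suc k)" for n
  proof -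
    have "dist (u n) c < 1 / real (Suc n)"
      using assms that by simp
    also have "\<dots> \<le> 1 / real (Suc m)"
      using that by (simp add: frac_le)
    finally show ?thesis
      using m by simp
  qed
  then show "\<exists>N. \<forall>n\<ge>N. dist (u n) c < r"
    by blast
qed

lemma closure_of_powertop_real_pointwise_limit:
  assumes z: "z \<in> powertop_real I closure_of A" and D: "countable D" "D \<subseteq> I"
  obtains b where "range b \<subseteq> A" "\<And>i. i \<in> D \<Longrightarrow> (\<lambda>n. b n i) \<longlonglongrightarrow> z i"
proof (cases "D = {}")
  case True
  have "A \<noteq> {}"
    using z by force
  then obtain a where "a \<in> A"
    by blast
  then show ?thesis
    using that[of "\<lambda>_. a"] True by simp
next
  case False
  define s where "s = from_nat_into D"
  have sI: "s k \<in> I" for k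
    using D(2) from_nat_into[OF False] unfolding s_def by blast
  define N where
    "N n = (\<Inter>k<n. {f \<in> topspace (powertop_real I). f (s k) \<in> ball (z (s k)) (1 / real (Suc n))})
             \<inter> topspace (powertop_real I)" for n
  have "openin (powertop_real I) (N n)" for n
    unfolding N_def
    by (intro openin_INT finite_lessThan openin_powertop_real_coordinate[OF sI open_ball])
  moreover have "z \<in> N n" for n
    using z by (simp add: N_def in_closure_of)
  ultimately have "\<exists>a. a \<in> A \<and> a \<in> N n" for n
    using z unfolding in_closure_of by blast
  then obtain b where bA: "\<And>n. b n \<in> A" and bN: "\<And>n. b n \<in> N n"
    by metis
  have "(\<lambda>n. b n (s k)) \<longlonglongrightarrow> z (s k)" for k
    by (rule LIMSEQ_dist_less_inverse_Suc[of k])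
      (use bN in \<open>auto simp: N_def dist_commute\<close>)
  moreover have "i \<in> range s" if "i \<in> D" for i
    using from_nat_into_surj[OF D(1) that] unfolding s_def by blast
  ultimately show ?thesis
    using that[of b] bA by blast
qed

lemma compactin_powertop_real_countable_approximation:
  assumes K: "compactin (powertop_real I) K"
    and A: "A \<subseteq> K" "z \<in> powertop_real I closure_of A"
    and D: "countable D" "D \<subseteq> I"
  obtains B g where "B \<subseteq> A" "countable B" "g \<in> K" "g \<in> powertop_real I closure_of B"
    "\<And>i. i \<in> D \<Longrightarrow> g i = z i"
proof -
  obtain b where bA: "range b \<subseteq> A" and lim: "\<And>i. i \<in> D \<Longrightarrow> (\<lambda>n. b n i) \<longlonglongrightarrow> z i"
    using closure_of_powertop_real_pointwise_limit[OF A(2) D] by blast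
  obtain g where "g \<in> K" and g: "\<And>m. g \<in> powertop_real I closure_of (b ` {m..})"
    using compactin_cluster_point[OF K order_trans[OF bA A(1)]] by blast
  have "g i = z i" if "i \<in> D" for i
    using cluster_point_coordinate_eq_limit[OF g _ lim[OF that]] that D(2) by blast
  moreover have "g \<in> powertop_real I closure_of (range b)"
    using g[of 0] by simp
  ultimately show ?thesis
    using that[of "range b" g] bA \<open>g \<in> K\<close> by blast
qed

lemma countable_tightness_compactin_Qp:
  assumes sep: "separable_space X" and lusin: "\<And>M. meager_in X M \<Longrightarrow> countable M"
    and K: "compactin (Qp X) K"
  shows "countable_tightness (subtopology (Qp X) K)"
proof -
  let ?P = "powertop_real (topspace X)"
  have KP: "compactin ?P K" and KQ: "K \<subseteq> topspace (Qp X)"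
    using K by (simp_all add: compactin_Qp)
  obtain S where S: "countable S" "S \<subseteq> topspace X" "X closure_of S = topspace X"
    using sep unfolding separable_space_def by blast
  show ?thesis
    unfolding countable_tightness_def subtopology_Qp[OF KQ]
  proof (intro ballI allI impI, elim conjE)
    fix z A
    assume "z \<in> topspace (subtopology ?P K)" "A \<subseteq> topspace (subtopology ?P K)"
      and zA: "z \<in> subtopology ?P K closure_of A"
    then have "z \<in> K" "A \<subseteq> K"
      by auto
    then have zQ: "quasicontinuous X z" "z \<in> extensional (topspace X)"
      using KQ by (auto simp: topspace_Qp)
    define D where "D = S \<union> discontinuities X z"
    have D: "countable D" "D \<subseteq> topspace X"
      using S lusin[OF meager_in_discontinuities[OF zQ(1)]]
      by (auto simp: D_def discontinuities_def)
    have "z \<in> ?P closure_of A"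
      using zA closure_of_subtopology_subset[of ?P K A] by blast
    then obtain B g where B: "B \<subseteq> A" "countable B" and g: "g \<in> K" "g \<in> ?P closure_of B"
      and gD: "\<And>i. i \<in> D \<Longrightarrow> g i = z i"
      using compactin_powertop_real_countable_approximation[OF KP \<open>A \<subseteq> K\<close> _ D] by blast
    have "quasicontinuous X g" "g \<in> extensional (topspace X)"
      using g(1) KQ by (auto simp: topspace_Qp)
    then have "g = z"
      using quasicontinuous_extensional_eqI[OF _ _ zQ(2) S(3)] gD by (simp add: D_def)
    then have "z \<in> subtopology ?P K closure_of B"
      using g \<open>A \<subseteq> K\<close> B(1) by (simp add: closure_of_subtopology Int_absorb1)
    then show "\<exists>B. B \<subseteq> A \<and> countable B \<and> z \<in> subtopology ?P K closure_of B"
      using B by blast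
  qed
qed

lemma uncountable_meager_in_imp_closed_nowhere_dense:
  assumes "meager_in X M" "uncountable M"
  obtains F where "closedin X F" "X interior_of F = {}" "uncountable F"
proof -
  obtain \<F> where \<F>: "countable \<F>" "\<And>S. S \<in> \<F> \<Longrightarrow> nowhere_dense_in X S" "M = \<Union>\<F>"
    using assms(1) unfolding meager_in_def by blast
  obtain N where N: "N \<in> \<F>" "uncountable N"
    using countable_UN[OF \<F>(1), of id] \<F>(3) assms(2) by auto
  then have "N \<subseteq> topspace X" "X interior_of (X closure_of N) = {}"
    using \<F>(2) unfolding nowhere_dense_in_def by auto
  moreover have "uncountable (X closure_of N)"
    using N(2) closure_of_subset[OF \<open>N \<subseteq> topspace X\<close>] countable_subset by blast
  ultimately show ?thesis
    using that[of "X closure_of N"] by simp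
qed

context Metric_space
begin

definition minfdist :: "'a \<Rightarrow> 'a set \<Rightarrow> real" where
  "minfdist x F = Inf (d x ` F)"

lemma minfdist_le: "c \<in> F \<Longrightarrow> minfdist x F \<le> d x c"
  unfolding minfdist_def by (rule cInf_lower) (auto intro: bdd_belowI[of _ 0])

lemma minfdist_triangle:
  assumes "x \<in> M" "y \<in> M" "F \<subseteq> M" "F \<noteq> {}"
  shows "minfdist x F \<le> d x y + minfdist y F"
proof -
  have "minfdist x F - d x y \<le> minfdist y F"
    unfolding minfdist_def[of y]
  proof (rule cInf_greatest)
    fix t assume "t \<in> d y ` F"
    then obtain c where c: "c \<in> F" "t = d y c" by blast
    have "minfdist x F \<le> d x c"
      by (rule minfdist_le[OF c(1)])
    also have "\<dots> \<le> d x y + d y c"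
      using triangle assms c by blast
    finally show "minfdist x F - d x y \<le> t"
      using c by simp
  qed (use assms(4) in simp)
  then show ?thesis by simp
qed

lemma minfdist_pos:
  assumes "closedin mtopology F" "F \<noteq> {}" "x \<in> M - F"
  shows "minfdist x F > 0"
proof -
  have "openin mtopology (M - F)"
    using assms(1) by (simp add: closedin_def)
  then obtain r where r: "r > 0" "mball x r \<subseteq> M - F"
    using assms(3) unfolding openin_mtopology by blast
  have "r \<le> minfdist x F"
    unfolding minfdist_def
  proof (rule cInf_greatest)
    fix t assume "t \<in> d x ` F"
    then obtain c where c: "c \<in> F" "t = d x c" by blast
    then have "c \<notin> mball x r"
      using r(2) by blast
    then show "r \<le> t"
      using c assms(3) closedin_subset[OF assms(1)] by force
  qed (use assms(2) in simp)
  then show ?thesis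
    using r(1) by linarith
qed

lemma separable_space_countable_dense_subset:
  assumes "separable_space mtopology" "F \<subseteq> M"
  obtains T where "countable T" "T \<subseteq> F" "F \<subseteq> mtopology closure_of T"
proof -
  obtain S where S: "countable S" "mtopology closure_of S = M"
    using assms(1) unfolding separable_space_def by auto
  define Near where "Near = {(s, k). s \<in> S \<and> (\<exists>c\<in>F. d s c < 1 / real (Suc k))}"
  define pick where "pick = (\<lambda>(s, k). SOME c. c \<in> F \<and> d s c < 1 / real (Suc k))"
  have pick: "pick (s, k) \<in> F \<and> d s (pick (s, k)) < 1 / real (Suc k)" if "(s, k) \<in> Near" for s k
    unfolding pick_def split_conv
    by (rule someI_ex) (use that in \<open>auto simp: Near_def\<close>)
  have "countable (S \<times> (UNIV :: nat set))"
    using S(1) by simp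
  then have "countable (pick ` Near)"
    by (rule countable_image[OF countable_subset, rotated]) (auto simp: Near_def)
  moreover have "pick ` Near \<subseteq> F"
  proof (rule image_subsetI)
    fix p assume "p \<in> Near"
    then show "pick p \<in> F"
      using pick by (cases p) blast
  qed
  moreover have "F \<subseteq> mtopology closure_of (pick ` Near)"
    unfolding metric_closure_of
  proof (intro subsetI CollectI conjI allI impI)
    fix y r assume "y \<in> F" "(r::real) > 0"
    then have y: "y \<in> M"
      using assms(2) by blast
    have "r / 2 > 0"
      using \<open>r > 0\<close> by simp
    then obtain k where k: "1 / real (Suc k) < r / 2"
      using nat_approx_posE by blast
    have "y \<in> mtopology closure_of S" "1 / real (Suc k) > 0"
      using y S(2) by simp_all
    then obtain s where s: "s \<in> S" "s \<in> mball y (1 / real (Suc k))"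
      unfolding metric_closure_of by blast
    then have "(s, k) \<in> Near"
      using \<open>y \<in> F\<close> unfolding Near_def by (auto simp: commute)
    then have c: "pick (s, k) \<in> M" "d s (pick (s, k)) < 1 / real (Suc k)"
      using pick assms(2) by blast+
    have "s \<in> M" "d y s < 1 / real (Suc k)"
      using s(2) by simp_all
    then have "d y (pick (s, k)) < r"
      using triangle[OF y \<open>s \<in> M\<close> c(1)] c(2) k by linarith
    then have "pick (s, k) \<in> mball y r"
      using y c(1) by simp
    then show "\<exists>t\<in>pick ` Near. t \<in> mball y r"
      using \<open>(s, k) \<in> Near\<close> by blast
  qed (use assms(2) in blast)
  ultimately show ?thesis
    by (rule that)
qed

lemma interior_of_empty_near_complement:
  assumes "mtopology interior_of F = {}" "a \<in> M" "\<rho> > 0"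
  obtains y where "y \<in> M - F" "d y a < \<rho>"
proof -
  have "\<not> mball a \<rho> \<subseteq> F"
  proof
    assume "mball a \<rho> \<subseteq> F"
    then have "mball a \<rho> \<subseteq> mtopology interior_of F"
      by (simp add: interior_of_maximal)
    moreover have "a \<in> mball a \<rho>"
      using assms(2,3) by simp
    ultimately show False
      using assms(1) by blast
  qed
  then obtain y where "y \<in> mball a \<rho>" "y \<notin> F"
    by blast
  then have "y \<in> M - F" "d y a < \<rho>"
    by (simp_all add: commute)
  then show ?thesis
    by (rule that)
qed

lemma halving_sequence_near:
  assumes F: "closedin mtopology F" "mtopology interior_of F = {}" "F \<noteq> {}"
    and c: "\<And>n. c n \<in> F" and r: "\<And>n. r n > 0"
  obtains x where "\<And>n. x n \<in> M - F" "\<And>n. d (x n) (c n) < r n"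
    "\<And>n. minfdist (x (Suc n)) F < minfdist (x n) F / 2"
proof -
  define next_point where "next_point a \<rho> = (SOME y. y \<in> M - F \<and> d y a < \<rho>)" for a \<rho>
  have next_point: "next_point a \<rho> \<in> M - F \<and> d (next_point a \<rho>) a < \<rho>"
    if "a \<in> F" "\<rho> > 0" for a \<rho>
  proof -
    have "a \<in> M"
      using that(1) closedin_subset[OF F(1)] by auto
    then have "\<exists>y. y \<in> M - F \<and> d y a < \<rho>"
      using interior_of_empty_near_complement[OF F(2) _ that(2)] by blast
    then show ?thesis
      unfolding next_point_def by (rule someI_ex)
  qed
  define x where "x = rec_nat (next_point (c 0) (r 0))
      (\<lambda>n xn. next_point (c (Suc n)) (min (r (Suc n)) (minfdist xn F / 2)))"
  have x0: "x 0 \<in> M - F \<and> d (x 0) (c 0) < r 0"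
    unfolding x_def using next_point[OF c r] by simp
  have xSuc: "x (Suc n) = next_point (c (Suc n)) (min (r (Suc n)) (minfdist (x n) F / 2))" for n
    by (simp add: x_def)
  have step: "x (Suc n) \<in> M - F \<and> d (x (Suc n)) (c (Suc n)) < min (r (Suc n)) (minfdist (x n) F / 2)"
    if "x n \<in> M - F" for n
    unfolding xSuc
    by (rule next_point[OF c]) (use minfdist_pos[OF F(1,3) that] r in simp)
  have xMF: "x n \<in> M - F" for n
    by (induction n) (use x0 step in blast)+
  show ?thesis
  proof (rule that)
    show "x n \<in> M - F" for n
      by (rule xMF)
    show "d (x n) (c n) < r n" for n
      using x0 step[OF xMF] by (cases n) auto
    show "minfdist (x (Suc n)) F < minfdist (x n) F / 2" for n
      using minfdist_le[OF c, of "x (Suc n)" "Suc n"] step[OF xMF, of n] by simp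
  qed
qed

lemma halving_sequence_disjoint_mballs:
  assumes F: "F \<subseteq> M" "F \<noteq> {}" and x: "\<And>n. x n \<in> M" "\<And>n. minfdist (x n) F > 0"
    and halving: "\<And>n. minfdist (x (Suc n)) F < minfdist (x n) F / 2"
  shows "disjoint_family (\<lambda>n. mball (x n) (minfdist (x n) F / 4))"
proof -
  let ?\<delta> = "\<lambda>n. minfdist (x n) F"
  have decay: "?\<delta> n < ?\<delta> m / 2" if "m < n" for m n
    using that
  proof (induction n)
    case (Suc n)
    show ?case
    proof (cases "m = n")
      case False
      then have "?\<delta> n < ?\<delta> m / 2"
        using Suc by simp
      then show ?thesis
        using halving[of n] x(2)[of n] by linarith
    qed (use halving in simp)
  qed simp
  have "mball (x m) (?\<delta> m / 4) \<inter> mball (x n) (?\<delta> n / 4) = {}" if "m < n" for m n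
  proof (rule ccontr)
    assume "mball (x m) (?\<delta> m / 4) \<inter> mball (x n) (?\<delta> n / 4) \<noteq> {}"
    then obtain w where w: "w \<in> M" "d (x m) w < ?\<delta> m / 4" "d (x n) w < ?\<delta> n / 4"
      by auto
    have "d (x m) (x n) \<le> d (x m) w + d w (x n)"
      using triangle x(1) w(1) by blast
    moreover have "d w (x n) = d (x n) w"
      by (rule commute)
    moreover have "?\<delta> m \<le> d (x m) (x n) + ?\<delta> n"
      using minfdist_triangle x(1) F by blast
    moreover have "?\<delta> n < ?\<delta> m / 2"
      using decay that by blast
    ultimately show False
      using w x(2)[of m] by linarith
  qed
  then show ?thesis
    unfolding disjoint_family_on_def
    by (metis Int_commute linorder_neqE_nat)
qed

lemma halving_sequence_dense:
  assumes sep: "separable_space mtopology"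
    and F: "closedin mtopology F" "mtopology interior_of F = {}" "F \<noteq> {}"
  obtains x where "\<And>n. x n \<in> M - F" "\<And>n. minfdist (x (Suc n)) F < minfdist (x n) F / 2"
    "\<And>y \<epsilon> p. \<lbrakk>y \<in> F; \<epsilon> > 0\<rbrakk> \<Longrightarrow> \<exists>n. odd n = p \<and> d y (x n) < \<epsilon>"
proof -
  have FM: "F \<subseteq> M"
    using closedin_subset[OF F(1)] by simp
  obtain T where T: "countable T" "T \<subseteq> F" "F \<subseteq> mtopology closure_of T"
    using separable_space_countable_dense_subset[OF sep FM] by blast
  have "T \<noteq> {}"
    using T(3) F(3) by auto
  define t where "t = from_nat_into T"
  (* Indices 2j and 2j+1 both aim at the j-th pair (i, k), i.e. at the i-th point of T within
     1/(k+1); so the even and the odd terms separately approach every point of F. *)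
  define c where "c n = t (fst (prod_decode (n div 2)))" for n
  define r where "r n = 1 / real (Suc (snd (prod_decode (n div 2))))" for n
  have cF: "c n \<in> F" for n
    using from_nat_into[OF \<open>T \<noteq> {}\<close>] T(2) unfolding c_def t_def by blast
  have rpos: "r n > 0" for n
    by (simp add: r_def)
  obtain x where x: "\<And>n. x n \<in> M - F" "\<And>n. d (x n) (c n) < r n"
    and halving: "\<And>n. minfdist (x (Suc n)) F < minfdist (x n) F / 2"
    using halving_sequence_near[where c=c and r=r, OF F cF rpos] by blast
  have "\<exists>n. odd n = p \<and> d y (x n) < \<epsilon>" if "y \<in> F" "\<epsilon> > 0" for y \<epsilon> p
  proof -
    have "y \<in> mtopology closure_of T" "\<epsilon> / 2 > 0"
      using T(3) that by auto
    then obtain t' where t': "t' \<in> T" "t' \<in> mball y (\<epsilon> / 2)"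
      unfolding metric_closure_of by blast
    then obtain i where i: "t i = t'"
      using from_nat_into_surj[OF T(1) t'(1)] unfolding t_def by blast
    obtain k where k: "1 / real (Suc k) < \<epsilon> / 2"
      using \<open>\<epsilon> / 2 > 0\<close> nat_approx_posE by blast
    define n where "n = 2 * prod_encode (i, k) + (if p then 1 else 0)"
    have "odd n = p" "c n = t'" "r n = 1 / real (Suc k)"
      by (simp_all add: n_def c_def r_def i)
    then have "d (x n) t' < \<epsilon> / 2"
      using x(2)[of n] k by simp
    moreover have "d y t' < \<epsilon> / 2" "y \<in> M" "t' \<in> M" "x n \<in> M"
      using t'(2) x(1)[of n] by simp_all
    ultimately have "d y (x n) < \<epsilon>"
      using triangle[of y t' "x n"] commute[of "x n" t'] by linarith
    then show ?thesis
      using \<open>odd n = p\<close> by blast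
  qed
  then show ?thesis
    using that x(1) halving by blast
qed

lemma closed_nowhere_dense_in_closures_of_disjoint_opens:
  assumes sep: "separable_space mtopology"
    and F: "closedin mtopology F" "mtopology interior_of F = {}"
  obtains G H where "openin mtopology G" "openin mtopology H" "G \<inter> H = {}"
    "F \<subseteq> mtopology closure_of G" "F \<subseteq> mtopology closure_of H"
proof (cases "F = {}")
  case True
  then show ?thesis
    using that[of "{}" "{}"] by simp
next
  case False
  have FM: "F \<subseteq> M"
    using closedin_subset[OF F(1)] by simp
  obtain x where x: "\<And>n. x n \<in> M - F"
    and halving: "\<And>n. minfdist (x (Suc n)) F < minfdist (x n) F / 2"
    and approach: "\<And>y \<epsilon> p. \<lbrakk>y \<in> F; \<epsilon> > 0\<rbrakk> \<Longrightarrow> \<exists>n. odd n = p \<and> d y (x n) < \<epsilon>"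
    using halving_sequence_dense[OF sep F False] by blast
  have xM: "x n \<in> M" and \<delta>: "minfdist (x n) F > 0" for n
    using x minfdist_pos[OF F(1) False x] by blast+
  define B where "B n = mball (x n) (minfdist (x n) F / 4)" for n
  have disj: "disjoint_family B"
    unfolding B_def by (rule halving_sequence_disjoint_mballs[of F x, OF FM False xM \<delta> halving])
  have xB: "x n \<in> B n" for n
    using xM \<delta> by (simp add: B_def)
  have closure: "F \<subseteq> mtopology closure_of (\<Union>n\<in>{n. odd n = p}. B n)" for p
    unfolding metric_closure_of
  proof (intro subsetI CollectI conjI allI impI)
    fix y \<epsilon> assume "y \<in> F" "(\<epsilon>::real) > 0"
    then obtain n where "odd n = p" "d y (x n) < \<epsilon>"
      using approach by blast
    moreover have "y \<in> M"
      using \<open>y \<in> F\<close> FM by blast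
    ultimately show "\<exists>z\<in>\<Union>n\<in>{n. odd n = p}. B n. z \<in> mball y \<epsilon>"
      using xB xM by auto
  qed (use FM in blast)
  show ?thesis
  proof (rule that)
    show "openin mtopology (\<Union>n\<in>{n. odd n = False}. B n)" "openin mtopology (\<Union>n\<in>{n. odd n = True}. B n)"
      by (auto simp: B_def)
    show "(\<Union>n\<in>{n. odd n = False}. B n) \<inter> (\<Union>n\<in>{n. odd n = True}. B n) = {}"
    proof (rule ccontr)
      assume "(\<Union>n\<in>{n. odd n = False}. B n) \<inter> (\<Union>n\<in>{n. odd n = True}. B n) \<noteq> {}"
      then obtain m n where "even m" "odd n" "B m \<inter> B n \<noteq> {}"
        by blast
      moreover have "m \<noteq> n"
        using \<open>even m\<close> \<open>odd n\<close> by blast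
      ultimately show False
        using disjoint_family_onD[OF disj] by blast
    qed
  qed (rule closure)+
qed

end

lemma quasicontinuousI_constant_near_closure:
  assumes F: "closedin X F" "X interior_of F = {}"
    and near: "\<And>x. x \<in> topspace X \<Longrightarrow>
                 \<exists>V. openin X V \<and> x \<in> X closure_of V \<and> (\<forall>w\<in>V - F. f w = f x)"
  shows "quasicontinuous X f"
proof (rule quasicontinuousI_locally_constant)
  fix x U assume x: "x \<in> topspace X" and U: "openin X U" "x \<in> U"
  obtain V where V: "openin X V" "x \<in> X closure_of V" and const: "\<forall>w\<in>V - F. f w = f x"
    using near[OF x] by blast
  show "\<exists>W. openin X W \<and> W \<noteq> {} \<and> W \<subseteq> U \<and> (\<forall>w\<in>W. f w = f x)"
  proof (intro exI conjI)
    show "openin X (U \<inter> V - F)"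
      by (intro openin_diff openin_Int U(1) V(1) F(1))
    show "U \<inter> V - F \<noteq> {}"
    proof
      assume "U \<inter> V - F = {}"
      then have "U \<inter> V \<subseteq> X interior_of F"
        by (intro interior_of_maximal openin_Int U(1) V(1)) blast
      moreover have "U \<inter> V \<noteq> {}"
        using V(2) U unfolding in_closure_of by blast
      ultimately show False
        using F(2) by blast
    qed
    show "\<forall>w\<in>U \<inter> V - F. f w = f x"
      using const by blast
  qed blast
qed

lemma quasicontinuous_indicator_modified_on_boundary:
  assumes G: "openin X G" "F \<subseteq> X closure_of G" "F \<subseteq> X closure_of (topspace X - X closure_of G)"
    and F: "closedin X F" "X interior_of F = {}"
    and off_F: "\<And>x. x \<in> topspace X - F \<Longrightarrow> f x = (if x \<in> X closure_of G then 1 else 0)"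
    and on_F: "\<And>x. x \<in> F \<Longrightarrow> f x \<in> {0, 1}"
  shows "quasicontinuous X f"
proof (rule quasicontinuousI_constant_near_closure[OF F])
  fix x assume x: "x \<in> topspace X"
  let ?G' = "topspace X - X closure_of G"
  have one: "\<forall>w\<in>G - F. f w = 1"
  proof
    fix w assume "w \<in> G - F"
    then have "w \<in> topspace X - F" "w \<in> X closure_of G"
      using openin_subset[OF G(1)] closure_of_subset[OF openin_subset[OF G(1)]] by blast+
    then show "f w = 1"
      using off_F by simp
  qed
  have zero: "\<forall>w\<in>?G' - F. f w = 0"
  proof
    fix w assume "w \<in> ?G' - F"
    then show "f w = 0"
      using off_F[of w] by simp
  qed
  show "\<exists>V. openin X V \<and> x \<in> X closure_of V \<and> (\<forall>w\<in>V - F. f w = f x)"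
  proof (cases "f x = 1")
    case True
    have "x \<in> X closure_of G"
    proof (cases "x \<in> F")
      case False
      then have "(if x \<in> X closure_of G then 1 else 0) = (1::real)"
        using off_F[of x] x True by simp
      then show ?thesis
        by (simp split: if_splits)
    qed (use G(2) in blast)
    then show ?thesis
      using G(1) one True by (intro exI[of _ G]) simp
  next
    case False
    then have "f x = 0"
      using on_F[of x] off_F[of x] x by (cases "x \<in> F") (simp_all split: if_splits)
    have "x \<in> X closure_of ?G'"
    proof (cases "x \<in> F")
      case notF: False
      then have "x \<notin> X closure_of G"
        using off_F[of x] x False by auto
      then have "x \<in> ?G'"
        using x by blast
      then show ?thesis
        by (rule subsetD[OF closure_of_subset[OF Diff_subset]])
    qed (use G(3) in blast)
    moreover have "openin X ?G'"
      by (intro openin_diff openin_topspace closedin_closure_of)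
    ultimately show ?thesis
      using zero \<open>f x = 0\<close> by (intro exI[of _ ?G']) simp
  qed
qed

definition binary_cube :: "'a set \<Rightarrow> 'a set \<Rightarrow> ('a \<Rightarrow> real) \<Rightarrow> ('a \<Rightarrow> real) set" where
  "binary_cube I F h = (\<Pi>\<^sub>E x\<in>I. if x \<in> F then {0, 1} else {h x})"

lemma compactin_binary_cube: "compactin (powertop_real I) (binary_cube I F h)"
  unfolding binary_cube_def compactin_PiE by (auto intro: finite_imp_compactin)

lemma binary_cube_finite_support_dense:
  assumes "F \<subseteq> I"
  shows "restrict (\<lambda>x. if x \<in> F then 1 else h x) I
           \<in> powertop_real I closure_of {f \<in> binary_cube I F h. finite {x \<in> F. f x \<noteq> 0}}"
    (is "?z \<in> _ closure_of ?A")
  unfolding in_closure_of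
proof (intro conjI allI impI)
  show "?z \<in> topspace (powertop_real I)"
    by simp
  fix N assume "?z \<in> N \<and> openin (powertop_real I) N"
  then obtain U where U: "finite {i \<in> I. U i \<noteq> UNIV}" "?z \<in> Pi\<^sub>E I U" "Pi\<^sub>E I U \<subseteq> N"
    unfolding openin_product_topology_alt by auto
  define a where "a = restrict (\<lambda>x. if x \<in> F then (if U x = UNIV then 0 else 1) else h x) I"
  have "a \<in> binary_cube I F h"
    by (simp add: a_def binary_cube_def)
  moreover have "{x \<in> F. a x \<noteq> 0} \<subseteq> {i \<in> I. U i \<noteq> UNIV}"
    using assms by (auto simp: a_def)
  then have "finite {x \<in> F. a x \<noteq> 0}"
    using U(1) finite_subset by blast
  moreover have "a \<in> Pi\<^sub>E I U"
  proof -
    have "a i \<in> U i" if "i \<in> I" for i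
    proof (cases "U i = UNIV")
      case False
      then have "a i = ?z i"
        by (simp add: a_def)
      then show ?thesis
        using U(2) that by (simp add: PiE_iff)
    qed simp
    then show ?thesis
      by (simp add: a_def PiE_iff)
  qed
  ultimately show "\<exists>y. y \<in> ?A \<and> y \<in> N"
    using U(3) by blast
qed

lemma not_countable_tightness_binary_cube:
  assumes "F \<subseteq> I" "uncountable F"
  shows "\<not> countable_tightness (subtopology (powertop_real I) (binary_cube I F h))"
proof
  let ?P = "powertop_real I" and ?K = "binary_cube I F h"
  let ?z = "restrict (\<lambda>x. if x \<in> F then 1 else h x) I"
  let ?A = "{f \<in> ?K. finite {x \<in> F. f x \<noteq> 0}}"
  assume tight: "countable_tightness (subtopology ?P ?K)"
  have K: "?K \<subseteq> topspace ?P"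
    using compactin_subset_topspace[OF compactin_binary_cube] .
  have z: "?z \<in> ?K"
    by (simp add: binary_cube_def)
  have top: "topspace (subtopology ?P ?K) = ?K"
    using K by auto
  have "?A \<subseteq> ?K" "?z \<in> ?P closure_of ?A"
    using binary_cube_finite_support_dense[OF assms(1)] by auto
  then have "?z \<in> subtopology ?P ?K closure_of ?A"
    using z by (simp add: closure_of_subtopology Int_absorb1)
  then have "\<exists>B. B \<subseteq> ?A \<and> countable B \<and> ?z \<in> subtopology ?P ?K closure_of B"
    using tight z \<open>?A \<subseteq> ?K\<close> unfolding countable_tightness_def top by blast
  then obtain B where B: "B \<subseteq> ?A" "countable B" "?z \<in> subtopology ?P ?K closure_of B"
    by blast
  define S where "S = (\<Union>b\<in>B. {x \<in> F. b x \<noteq> 0})"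
  have "countable S"
    unfolding S_def using B(1,2) by (intro countable_UN) (auto intro: countable_finite)
  then obtain y where "y \<in> F" "y \<notin> S"
    using assms(2) countable_subset[of F S] by blast
  then have y: "y \<in> F" "\<And>b. b \<in> B \<Longrightarrow> b y = 0"
    unfolding S_def by blast+
  have "y \<in> I"
    using y(1) assms(1) by blast
  let ?N = "{f \<in> topspace ?P. f y \<in> {0<..}}"
  have "openin ?P ?N"
    by (rule openin_powertop_real_coordinate[OF \<open>y \<in> I\<close> open_greaterThan])
  moreover have "?z \<in> ?N"
    using y(1) \<open>y \<in> I\<close> by simp
  moreover have "?z \<in> ?P closure_of B"
    using B(3) closure_of_subtopology_subset[of ?P ?K B] by blast
  ultimately have "B \<inter> ?N \<noteq> {}"
    unfolding in_closure_of by (meson disjoint_iff)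
  then obtain b where "b \<in> B" "b y > 0"
    by auto
  then show False
    using y(2)[of b] by simp
qed

lemma metrizable_closed_nowhere_dense_in_closures_of_disjoint_opens:
  assumes "separable_space X" "metrizable_space X" "closedin X F" "X interior_of F = {}"
  obtains G H where "openin X G" "openin X H" "G \<inter> H = {}"
    "F \<subseteq> X closure_of G" "F \<subseteq> X closure_of H"
proof -
  obtain M d where "Metric_space M d" and X: "X = Metric_space.mtopology M d"
    using assms(2) unfolding metrizable_space_def by blast
  then show ?thesis
    using Metric_space.closed_nowhere_dense_in_closures_of_disjoint_opens assms(1,3,4) that
    by metis
qed

lemma compactin_Qp_not_countable_tightness:
  assumes sep: "separable_space X" and met: "metrizable_space X"
    and M: "meager_in X M" "uncountable M"
  obtains K where "compactin (Qp X) K" "\<not> countable_tightness (subtopology (Qp X) K)"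
proof -
  obtain F where F: "closedin X F" "X interior_of F = {}" "uncountable F"
    using uncountable_meager_in_imp_closed_nowhere_dense[OF M] by blast
  obtain G H where GH: "openin X G" "openin X H" "G \<inter> H = {}"
    "F \<subseteq> X closure_of G" "F \<subseteq> X closure_of H"
    using metrizable_closed_nowhere_dense_in_closures_of_disjoint_opens[OF sep met F(1,2)] by blast
  have "H \<subseteq> topspace X - X closure_of G"
    using openin_subset[OF GH(2)] openin_Int_closure_of_eq_empty[OF GH(2)] GH(3) by blast
  then have FG': "F \<subseteq> X closure_of (topspace X - X closure_of G)"
    using GH(5) closure_of_mono by blast
  define K where "K = binary_cube (topspace X) F (\<lambda>x. if x \<in> X closure_of G then 1 else 0)"
  have "quasicontinuous X f" if "f \<in> K" for f
  proof (rule quasicontinuous_indicator_modified_on_boundary[OF GH(1,4) FG' F(1,2)])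
    show "f x = (if x \<in> X closure_of G then 1 else 0)" if "x \<in> topspace X - F" for x
      using \<open>f \<in> K\<close> that by (auto simp: K_def binary_cube_def PiE_iff)
    show "f x \<in> {0, 1}" if "x \<in> F" for x
    proof -
      have "x \<in> topspace X"
        using that closedin_subset[OF F(1)] by blast
      then have "f x \<in> (if x \<in> F then {0, 1} else {if x \<in> X closure_of G then 1 else 0})"
        using \<open>f \<in> K\<close> by (simp add: K_def binary_cube_def PiE_iff)
      then show ?thesis
        using that by simp
    qed
  qed
  then have KQ: "K \<subseteq> topspace (Qp X)"
    by (auto simp: topspace_Qp K_def binary_cube_def PiE_iff)
  show ?thesis
  proof (rule that)
    show "compactin (Qp X) K"
      unfolding compactin_Qp K_def using KQ compactin_binary_cube by (simp add: K_def)
    show "\<not> countable_tightness (subtopology (Qp X) K)"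
      unfolding subtopology_Qp[OF KQ] unfolding K_def
      by (rule not_countable_tightness_binary_cube[OF closedin_subset[OF F(1)] F(3)])
  qed
qed

theorem corollary5p2:
  fixes X :: "'a topology"
  assumes "separable_space X" and "metrizable_space X" and "uncountable (topspace X)"
  shows "lusin_set X \<longleftrightarrow>
           (\<forall>K. compactin (Qp X) K \<longrightarrow> countable_tightness (subtopology (Qp X) K))"
proof
  assume "lusin_set X"
  then have "\<And>M. meager_in X M \<Longrightarrow> countable M"
    by (simp add: lusin_set_def)
  then show "\<forall>K. compactin (Qp X) K \<longrightarrow> countable_tightness (subtopology (Qp X) K)"
    using countable_tightness_compactin_Qp[OF assms(1)] by blast
next
  assume tight: "\<forall>K. compactin (Qp X) K \<longrightarrow> countable_tightness (subtopology (Qp X) K)"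
  have "countable M" if meager: "meager_in X M" for M
  proof (rule ccontr)
    assume "uncountable M"
    then obtain K where "compactin (Qp X) K" "\<not> countable_tightness (subtopology (Qp X) K)"
      using compactin_Qp_not_countable_tightness[OF assms(1,2) meager] by blast
    then show False
      using tight by blast
  qed
  then show "lusin_set X"
    using assms by (simp add: lusin_set_def)
qed

end
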